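(* Let $\eta_\varepsilon$ be as in the context. Let $b\in(-1,1)$, $a\in(0,1)$ (possibly depending on $\varepsilon$), and let $\dot a,\dot b,\dot B$ be real parameters. Set $A=\sqrt{1-b^2}$, $B=\frac{1}{\sqrt2}\sqrt{1-a^2}\sqrt{1-b^2}$, $z_\pm=\varepsilon^{-1}B(x\pm a)$, and define $$ K_{\rm overlap}=\frac12\dot b(1-b^2)^{1/2}\int_{\mathbb R}\eta_\varepsilon^2\big(\tanh(z_+)\mathrm{sech}^2(z_-)-\tanh(z_-)\mathrm{sech}^2(z_+)\big)dx-\varepsilon^{-1}b(1-b^2)^{3/2}(B\dot a+\dot Ba)\int_{\mathbb R}\eta_\varepsilon^2\,\mathrm{sech}^2(z_+)\mathrm{sech}^2(z_-)\,dx . $$ Assume there are constants $C_1,C_2>0$ with $a\le C_1\varepsilon^{1/6}$ and $e^{-4Ba\varepsilon^{-1}}\le C_2\varepsilon^2|\log\varepsilon|$ for all small $\varepsilon$. Then, as $\varepsilon\to0$, $$ K_{\rm overlap}=2\varepsilon\dot b(1-b^2)^{1/2}B^{-1}(1-a^2)\big(1+\mathcal O(\varepsilon^{1/3})\big)-16\,b(1-b^2)^{3/2}\big(\dot a+B^{-1}\dot Ba\big)(1-a^2)e^{-4Ba\varepsilon^{-1}}\big(2Ba\varepsilon^{-1}-1\big)\big(1+\mathcal O(\varepsilon^{1/3})\big). $$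
   Context: For all sufficiently small $\varepsilon>0$, $\eta_\varepsilon:\mathbb R\to(0,\infty)$ is a smooth solution of $\varepsilon^2\eta_\varepsilon''+(1-x^2-\eta_\varepsilon^2)\eta_\varepsilon=0$ on $\mathbb R$ that decays to zero as $|x|\to\infty$ faster than any exponential, and it has the following properties: $\eta_\varepsilon(x)\to\eta_0(x)$ pointwise as $\varepsilon\to0$, where $\eta_0(x)=(1-x^2)^{1/2}$ for $|x|<1$ and $\eta_0(x)=0$ for $|x|>1$; for every compact $K\subset(-1,1)$ there is $C_K>0$ with $\|\eta_\varepsilon-\eta_0\|_{C^1(K)}\le C_K\varepsilon^2$; and there is $C>0$ with $\|\eta_\varepsilon-\eta_0\|_{L^\infty}\le C\varepsilon^{1/3}$, $\|\eta_\varepsilon'\|_{L^\infty}\le C\varepsilon^{-1/3}$, $\|\eta_\varepsilon''\|_{L^\infty}\le C\varepsilon^{-1}$. The notation $f=g(1+\mathcal O(\varepsilon^{1/3}))$ means $|f/g-1|\le C\varepsilon^{1/3}$ for some constant $C$ and all sufficiently small $\varepsilon$. *)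

theory Defs
  imports "HOL-Analysis.Analysis"
begin

definition sech :: "real \<Rightarrow> real" where
  "sech z = 1 / cosh z"

definition eta0 :: "real \<Rightarrow> real" where
  "eta0 x = (if \<bar>x\<bar> < 1 then sqrt (1 - x^2) else 0)"

definition eta0' :: "real \<Rightarrow> real" where
  "eta0' x = - x / sqrt (1 - x^2)"

definition eta_family :: "(real \<Rightarrow> real \<Rightarrow> real) \<Rightarrow> bool" where
  "eta_family \<eta> \<longleftrightarrow> (\<exists>\<epsilon>0>0.
     (\<forall>\<epsilon>. 0 < \<epsilon> \<and> \<epsilon> < \<epsilon>0 \<longrightarrow>
        (\<forall>x. \<eta> \<epsilon> x > 0)
      \<and> (\<forall>n x. ((deriv ^^ n) (\<eta> \<epsilon>)) differentiable (at x))
      \<and> (\<forall>x. \<epsilon>^2 * (deriv ^^ 2) (\<eta> \<epsilon>) x + (1 - x^2 - (\<eta> \<epsilon> x)^2) * \<eta> \<epsilon> x = 0)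
      \<and> (\<forall>c>0. ((\<lambda>x. \<eta> \<epsilon> x * exp (c * \<bar>x\<bar>)) \<longlongrightarrow> 0) at_infinity))
   \<and> (\<forall>x. ((\<lambda>\<epsilon>. \<eta> \<epsilon> x) \<longlongrightarrow> eta0 x) (at_right 0))
   \<and> (\<forall>K. compact K \<and> K \<subseteq> {-1<..<1} \<longrightarrow>
        (\<exists>C>0. \<forall>\<epsilon>. 0 < \<epsilon> \<and> \<epsilon> < \<epsilon>0 \<longrightarrow> (\<forall>x\<in>K.
            \<bar>\<eta> \<epsilon> x - eta0 x\<bar> \<le> C * \<epsilon>^2
          \<and> \<bar>deriv (\<eta> \<epsilon>) x - eta0' x\<bar> \<le> C * \<epsilon>^2)))
   \<and> (\<exists>C>0. \<forall>\<epsilon>. 0 < \<epsilon> \<and> \<epsilon> < \<epsilon>0 \<longrightarrow> (\<forall>x.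
            \<bar>\<eta> \<epsilon> x - eta0 x\<bar> \<le> C * \<epsilon> powr (1/3)
          \<and> \<bar>deriv (\<eta> \<epsilon>) x\<bar> \<le> C * \<epsilon> powr (-1/3)
          \<and> \<bar>(deriv ^^ 2) (\<eta> \<epsilon>) x\<bar> \<le> C / \<epsilon>)))"

definition Bpar :: "real \<Rightarrow> real \<Rightarrow> real" where
  "Bpar a b = (1 / sqrt 2) * sqrt (1 - a^2) * sqrt (1 - b^2)"

definition K_overlap ::
  "(real \<Rightarrow> real \<Rightarrow> real) \<Rightarrow> real \<Rightarrow> real \<Rightarrow> real \<Rightarrow> real \<Rightarrow> real \<Rightarrow> real \<Rightarrow> real" where
  "K_overlap \<eta> \<epsilon> a b ad bd Bd =
    (let B = Bpar a b;
         zp = (\<lambda>x. B * (x + a) / \<epsilon>);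
         zm = (\<lambda>x. B * (x - a) / \<epsilon>)
     in (1/2) * bd * sqrt (1 - b^2) *
          (\<integral>x. (\<eta> \<epsilon> x)^2 * (tanh (zp x) * (sech (zm x))^2 - tanh (zm x) * (sech (zp x))^2) \<partial>lborel)
        - (1/\<epsilon>) * b * (1 - b^2) powr (3/2) * (B * ad + Bd * a) *
          (\<integral>x. (\<eta> \<epsilon> x)^2 * (sech (zp x))^2 * (sech (zm x))^2 \<partial>lborel))"

end

theory Submission
  imports Defs "HOL-Real_Asymp.Real_Asymp"
begin

(* Put k = B/eps, so that z+ = k*x + k*a and z- = k*x - k*a.  Then K_overlap is a linear
   combination of the weighted integrals of eta_eps^2 against two explicit kernels,
     H(x) = tanh z+ * sech^2 z- - tanh z- * sech^2 z+   and   W(x) = sech^2 z+ * sech^2 z-.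
   (1) The substitution t = tanh z+ turns both kernels into rational functions of t with
       elementary antiderivatives.  With E = exp(-4ka) this gives exactly computable integrals,
       whose expansion in E reads  int H = (4/k)(1 + O(E + kaE))  and
       int W = (16E(2ka - 1)/k)(1 + O(E)).
   (2) Both kernels are nonnegative and concentrated on |x| <~ a + 1/k: their second moments are
       bounded by (O(a^2) + O(1/k^2)) times their total mass.
   (3) Since |eta_eps^2 - (1 - a^2)| <= x^2 + a^2 + O(eps^(1/3)), a weighted-average lemma turns
       (1) and (2) into  int eta^2 K = (1 - a^2) (int K) (1 + O(a^2 + 1/k^2 + eps^(1/3))).
   (4) For a single small eps the hypotheses a = O(eps^(1/6)), 1/k = O(eps) and
       E <= (eps^(1/3)/100)^2 make every error O(eps^(1/3)) with an explicit constant
       (fixed_eps_expansion); lemma4 only checks that these conditions hold eventually. *)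

section \<open>Hyperbolic functions\<close>

lemma cosh_nonzero: "cosh (y::real) \<noteq> 0"
  by (metis cosh_real_pos less_irrefl)

lemma sech_pos: "sech y > 0" for y :: real
  unfolding sech_def by simp

lemma sech_even: "sech (-y) = sech y" for y :: real
  by (simp add: sech_def)

lemma sech_sq: "sech z ^ 2 = 1 - tanh z ^ 2" for z :: real
proof -
  have "cosh z ^ 2 - sinh z ^2 = 1" by (simp add: cosh_square_eq)
  moreover have "1 + sinh z ^2 > 0" by (simp add: add_pos_nonneg)
  ultimately show ?thesis
    using cosh_nonzero[of z] unfolding sech_def tanh_def by (simp add: field_simps)
qed

lemma isCont_sech [continuous_intros]: "isCont sech (z::real)"
  unfolding sech_def[abs_def] by (intro continuous_intros) (simp add: cosh_nonzero)

lemma abs_tanh_less_1: "\<bar>tanh (y::real)\<bar> < 1"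
  using tanh_real_bounds[of y] by auto

lemma one_minus_tanh_prod_pos: "1 - tanh p * tanh d > (0::real)"
proof -
  have "tanh p * tanh d \<le> \<bar>tanh p\<bar> * \<bar>tanh d\<bar>" by (simp add: abs_mult[symmetric])
  also have "\<dots> \<le> \<bar>tanh p\<bar>" using abs_tanh_less_1[of d] by (intro mult_left_le) auto
  also have "\<dots> < 1" using abs_tanh_less_1[of p] .
  finally show ?thesis by simp
qed

lemma tanh_diff: "tanh (p - d) = (tanh p - tanh d) / (1 - tanh p * tanh d)" for p d :: real
  using tanh_add[of p "-d", OF cosh_nonzero cosh_nonzero] by simp

text \<open>The inverse of tanh, used to evaluate logarithms at the endpoints of the substitution.\<close>
lemma ln_ratio_tanh: "ln ((1 + tanh y) / (1 - tanh y)) = 2 * y" for y :: real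
  using artanh_tanh_real[of y] by (simp add: artanh_def)

lemma cosh_exp_bounds: "exp \<bar>y\<bar> / 2 \<le> cosh y" "cosh y \<le> exp \<bar>y\<bar>" for y :: real
proof -
  have c: "cosh y = (exp \<bar>y\<bar> + exp (-\<bar>y\<bar>)) / 2"
    using cosh_real_abs[of y] cosh_field_def[of "\<bar>y\<bar>"] by simp
  have "exp (-\<bar>y\<bar>) \<le> exp \<bar>y\<bar>" by simp
  then show "exp \<bar>y\<bar> / 2 \<le> cosh y" "cosh y \<le> exp \<bar>y\<bar>"
    unfolding c using exp_gt_zero[of "-\<bar>y\<bar>"] by (simp_all add: field_simps)
qed

lemma sech2_upper: "sech y^2 \<le> 4 * exp (-2*\<bar>y\<bar>)" for y :: real
proof -
  have "sech y \<le> 2 * exp (-\<bar>y\<bar>)" unfolding sech_def using cosh_exp_bounds(1)[of y]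
    by (simp add: divide_simps exp_minus)
  then have "sech y^2 \<le> (2 * exp (-\<bar>y\<bar>))^2" using sech_pos[of y] by (intro power_mono) auto
  also have "\<dots> = 4 * exp (-2*\<bar>y\<bar>)" by (simp add: power2_eq_square exp_add[symmetric])
  finally show ?thesis .
qed

lemma sech2_lower: "exp (-2*\<bar>y\<bar>) \<le> sech y^2" for y :: real
proof -
  have "exp (-\<bar>y\<bar>) \<le> sech y" unfolding sech_def using cosh_exp_bounds(2)[of y]
    by (simp add: divide_simps exp_minus)
  then have "exp (-\<bar>y\<bar>)^2 \<le> sech y^2" by (intro power_mono) auto
  then show ?thesis by (simp add: power2_eq_square exp_add[symmetric])
qed

lemma sq_exp_bound: "t \<ge> 0 \<Longrightarrow> t^2 * exp (-2*t) \<le> (1::real)"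
proof -
  assume t: "t \<ge> 0"
  have "t \<le> exp t" using exp_ge_add_one_self[of t] by linarith
  then have "t^2 \<le> exp t ^2" using t by (intro power_mono) auto
  also have "exp t^2 = exp (2*t)" by (simp add: power2_eq_square exp_add[symmetric])
  finally show ?thesis by (simp add: exp_minus field_simps)
qed

lemma sq_sech2_bound: "y^2 * sech y^2 \<le> 16 * sech (y/2)^2" for y :: real
proof -
  have "y^2 * exp (-\<bar>y\<bar>) \<le> 4"
    using sq_exp_bound[of "\<bar>y\<bar>/2"] by (simp add: power_divide)
  then have "(y^2 * exp (-\<bar>y\<bar>)) * (4 * exp (-\<bar>y\<bar>)) \<le> 4 * (4 * exp (-\<bar>y\<bar>))"
    by (intro mult_right_mono) auto
  moreover have "exp (-2*\<bar>y\<bar>) = exp (-\<bar>y\<bar>) * exp (-\<bar>y\<bar>)" by (simp add: exp_add[symmetric])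
  ultimately have "y^2 * (4 * exp (-2*\<bar>y\<bar>)) \<le> 16 * exp (-\<bar>y\<bar>)"
    by (simp only: mult_ac)
  moreover have "y^2 * sech y^2 \<le> y^2 * (4 * exp (-2*\<bar>y\<bar>))"
    by (intro mult_left_mono sech2_upper) auto
  moreover have "exp (-\<bar>y\<bar>) \<le> sech (y/2)^2" using sech2_lower[of "y/2"] by simp
  ultimately show ?thesis by linarith
qed

section \<open>Integrals over the real line\<close>

lemma integral_real_line_FTC:
  fixes F f :: "real \<Rightarrow> real"
  assumes d: "\<And>x. (F has_real_derivative f x) (at x)" and c: "\<And>x. isCont f x"
    and nn: "\<And>x. 0 \<le> f x" and A: "(F \<longlongrightarrow> A) at_bot" and B: "(F \<longlongrightarrow> B) at_top"
  shows "integrable lborel f" "integral\<^sup>L lborel f = B - A"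
proof -
  have *: "set_integrable lborel (einterval (-\<infinity>) \<infinity>) f" "(LBINT x=-\<infinity>..\<infinity>. f x) = B - A"
    by (rule interval_integral_FTC_nonneg[where F=F];
        (use d c nn A B in \<open>auto simp: ereal_tendsto_simps1\<close>))+
  from *(1) show "integrable lborel f" by (simp add: set_integrable_def)
  from *(2) show "integral\<^sup>L lborel f = B - A"
    by (simp add: interval_lebesgue_integral_def set_lebesgue_integral_def)
qed

lemma integral_tanh_substitution:
  fixes \<Phi> \<phi> :: "real \<Rightarrow> real" and k \<beta> :: real
  assumes k: "k > 0" and D: "\<And>t. -1 < t \<Longrightarrow> t < 1 \<Longrightarrow> (\<Phi> has_real_derivative \<phi> t) (at t)"
    and C: "continuous_on {-1..1} \<Phi>" and C2: "continuous_on {-1<..<1} \<phi>"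
    and N: "\<And>t. -1 < t \<Longrightarrow> t < 1 \<Longrightarrow> 0 \<le> \<phi> t"
  shows "integrable lborel (\<lambda>x. sech (k*x+\<beta>)^2 * \<phi> (tanh (k*x+\<beta>)))"
    "(\<integral>x. sech (k*x+\<beta>)^2 * \<phi> (tanh (k*x+\<beta>)) \<partial>lborel) = (\<Phi> 1 - \<Phi> (-1)) / k"
proof -
  define u where "u x = tanh (k*x+\<beta>)" for x
  define F where "F x = \<Phi> (u x) / k" for x
  have tb: "-1 < u x" "u x < 1" for x unfolding u_def using tanh_real_bounds by auto
  have du: "(u has_real_derivative (1 - u x^2) * k) (at x)" for x
    unfolding u_def by (auto intro!: derivative_eq_intros simp: cosh_nonzero)
  have dF: "(F has_real_derivative sech (k*x+\<beta>)^2 * \<phi> (u x)) (at x)" for x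
  proof -
    have "((\<lambda>x. \<Phi> (u x)) has_real_derivative \<phi> (u x) * ((1 - u x^2) * k)) (at x)"
      by (rule DERIV_chain2[OF D du]) (use tb in auto)
    then have "(F has_real_derivative \<phi> (u x) * ((1 - u x^2) * k) / k) (at x)"
      unfolding F_def by (rule DERIV_cdivide)
    then show ?thesis using k by (simp add: sech_sq u_def mult.commute)
  qed
  have cf: "isCont (\<lambda>x. sech (k*x+\<beta>)^2 * \<phi> (u x)) x" for x
  proof -
    have "isCont u x" unfolding u_def by (intro continuous_intros) (simp add: cosh_nonzero)
    moreover have "isCont \<phi> (u x)" using C2 tb[of x] by (simp add: continuous_on_eq_continuous_at)
    ultimately have "isCont (\<lambda>x. \<phi> (u x)) x" by (rule isCont_o2)
    moreover have "isCont (\<lambda>x. sech (k*x+\<beta>)) x"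
      by (rule isCont_o2[where f="\<lambda>x. k*x+\<beta>", OF _ isCont_sech]) (intro continuous_intros)
    ultimately show ?thesis by (intro continuous_intros)
  qed
  have nn: "0 \<le> sech (k*x+\<beta>)^2 * \<phi> (u x)" for x using N tb by auto
  have "filterlim (\<lambda>x. k*x+\<beta>) at_top at_top" "filterlim (\<lambda>x. k*x+\<beta>) at_bot at_bot"
    using k by real_asymp+
  then have "(u \<longlongrightarrow> 1) at_top" "(u \<longlongrightarrow> -1) at_bot" unfolding u_def
    using filterlim_compose[OF tanh_real_at_top] filterlim_compose[OF tanh_real_at_bot] by auto
  then have "(F \<longlongrightarrow> \<Phi> 1 / k) at_top" "(F \<longlongrightarrow> \<Phi> (-1) / k) at_bot" unfolding F_def
    by (intro tendsto_divide tendsto_const continuous_on_tendsto_compose[OF C];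
        use tb k in \<open>auto intro!: always_eventually less_imp_le\<close>)+
  then show "integrable lborel (\<lambda>x. sech (k*x+\<beta>)^2 * \<phi> (tanh (k*x+\<beta>)))"
    "(\<integral>x. sech (k*x+\<beta>)^2 * \<phi> (tanh (k*x+\<beta>)) \<partial>lborel) = (\<Phi> 1 - \<Phi> (-1)) / k"
    using integral_real_line_FTC[OF dF cf nn] by (auto simp: u_def diff_divide_distrib)
qed

lemma integral_sech2:
  assumes k: "k > (0::real)"
  shows "integrable lborel (\<lambda>x. sech (k*x+\<beta>)^2)" "(\<integral>x. sech (k*x+\<beta>)^2 \<partial>lborel) = 2 / k"
  using integral_tanh_substitution[OF k, of "\<lambda>t. t" "\<lambda>t. 1" \<beta>]
  by (auto intro!: derivative_eq_intros continuous_intros)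

lemma integral_sech2_minus:
  assumes k: "k > (0::real)"
  shows "integrable lborel (\<lambda>x. sech (k*x-\<beta>)^2)" "(\<integral>x. sech (k*x-\<beta>)^2 \<partial>lborel) = 2 / k"
  using integral_sech2[OF k, of "-\<beta>"] by simp_all

section \<open>The two overlap kernels and their exact integrals\<close>

definition Hker :: "real \<Rightarrow> real \<Rightarrow> real \<Rightarrow> real" where
  "Hker k a x = tanh (k*x+k*a) * sech (k*x-k*a)^2 - tanh (k*x-k*a) * sech (k*x+k*a)^2"

definition Wker :: "real \<Rightarrow> real \<Rightarrow> real \<Rightarrow> real" where
  "Wker k a x = sech (k*x+k*a)^2 * sech (k*x-k*a)^2"

text \<open>After the substitution t = tanh z+, with T = tanh (2ka), the kernels become sech^2 z+
  times the rational functions phiW T and phiH T; PhiW T and PhiH T are their antiderivatives.\<close>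
definition phiW :: "real \<Rightarrow> real \<Rightarrow> real" where
  "phiW T t = (1 - t^2) * (1 - T^2) / (1 - t*T)^2"
definition PhiW :: "real \<Rightarrow> real \<Rightarrow> real" where
  "PhiW T t = (1 - T^2) / T^3 * ((T^2 - 1) / (1 - T*t) - 2 * ln (1 - T*t) + (1 - T*t))"
definition phiH :: "real \<Rightarrow> real \<Rightarrow> real" where
  "phiH T t = T * (1 + t^2 - 2*t*T) / (1 - t*T)^2"
definition PhiH :: "real \<Rightarrow> real \<Rightarrow> real" where
  "PhiH T t = t * (t - T) / (1 - t*T) + 2 * t / T + 2 * ((1 - T^2) / T^2) * ln (1 - T*t)"

lemma sech_diff_form: "sech (p - d)^2 = phiW (tanh d) (tanh p)" for p d :: real
proof -
  let ?s = "tanh p" let ?T = "tanh d"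
  have n: "1 - ?s * ?T \<noteq> 0" using one_minus_tanh_prod_pos[of p d] by simp
  have "sech (p-d)^2 = 1 - ((?s - ?T)/(1 - ?s*?T))^2" by (simp add: sech_sq tanh_diff)
  also have "\<dots> = (1 - ?s^2) * (1 - ?T^2) / (1 - ?s*?T)^2" using n
    by (simp add: divide_simps power2_eq_square) (simp add: algebra_simps)
  finally show ?thesis by (simp add: phiW_def)
qed

lemma Wker_tanh_form: "Wker k a x = sech (k*x+k*a)^2 * phiW (tanh (2*k*a)) (tanh (k*x+k*a))"
  using sech_diff_form[of "k*x+k*a" "2*k*a"] unfolding Wker_def by (simp add: algebra_simps)

lemma Hker_tanh_form: "Hker k a x = sech (k*x+k*a)^2 * phiH (tanh (2*k*a)) (tanh (k*x+k*a))"
proof -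
  define p d where "p = k*x+k*a" and "d = 2*k*a"
  let ?s = "tanh p" let ?T = "tanh d"
  have pd: "k*x-k*a = p - d" by (simp add: p_def d_def)
  have n: "1 - ?s * ?T \<noteq> 0" using one_minus_tanh_prod_pos[of p d] by simp
  have "Hker k a x = ?s * ((1 - ?s^2) * (1 - ?T^2) / (1 - ?s*?T)^2) - (?s - ?T)/(1 - ?s*?T) * (1 - ?s^2)"
    unfolding Hker_def pd p_def[symmetric] sech_diff_form phiW_def by (simp add: tanh_diff sech_sq)
  also have "\<dots> = (1 - ?s^2) * (?T * (1 + ?s^2 - 2*?s*?T) / (1 - ?s*?T)^2)" using n
    by (simp add: divide_simps power2_eq_square) (simp add: algebra_simps)
  finally show ?thesis by (simp add: phiH_def sech_sq p_def d_def)
qed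

lemma one_minus_prod_pos: "0 < T \<Longrightarrow> T < 1 \<Longrightarrow> -1 \<le> t \<Longrightarrow> t \<le> 1 \<Longrightarrow> 1 - T*t > (0::real)"
  using mult_left_le[of t T] by (smt (verit) mult_minus_right mult_right_mono)

lemma ln_lin_deriv: "1 - T*t > 0 \<Longrightarrow> ((\<lambda>z. ln (1 - T*z)) has_real_derivative -T/(1 - T*t)) (at t)"
  by (auto intro!: derivative_eq_intros)

lemma inv_lin_deriv: "1 - T*t > 0 \<Longrightarrow> ((\<lambda>z. 1 / (1 - T*z)) has_real_derivative T/(1 - T*t)^2) (at t)"
  by (auto intro!: derivative_eq_intros simp: power2_eq_square)

lemma PhiW_deriv:
  assumes T: "0 < T" "T < 1" and t: "-1 < t" "t < 1"
  shows "(PhiW T has_real_derivative phiW T t) (at t)"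
proof -
  have v: "1 - T*t > 0" using one_minus_prod_pos T t by simp
  have "((\<lambda>z. (1 - T^2) / T^3 * ((T^2 - 1) * (1 / (1 - T*z)) - 2 * ln (1 - T*z) + (1 - T*z)))
     has_real_derivative
     (1 - T^2) / T^3 * ((T^2 - 1) * (T/(1 - T*t)^2) - 2 * (-T/(1 - T*t)) + -T)) (at t)"
    by (intro DERIV_cmult DERIV_add DERIV_diff inv_lin_deriv ln_lin_deriv v)
       (auto intro!: derivative_eq_intros)
  moreover have "(1 - T^2) / T^3 * ((T^2 - 1) * (T/(1 - T*t)^2) - 2 * (-T/(1 - T*t)) + -T) = phiW T t"
    unfolding phiW_def using v T
    by (simp add: divide_simps power2_eq_square power3_eq_cube) (simp add: algebra_simps)
  ultimately show ?thesis by (simp add: PhiW_def[abs_def])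
qed

lemma PhiH_deriv:
  assumes T: "0 < T" "T < 1" and t: "-1 < t" "t < 1"
  shows "(PhiH T has_real_derivative phiH T t) (at t)"
proof -
  have v: "1 - T*t > 0" using one_minus_prod_pos T t by simp
  have "((\<lambda>z. z * (z - T) * (1 / (1 - T*z)) + 2 / T * z + 2 * ((1 - T^2) / T^2) * ln (1 - T*z))
      has_real_derivative phiH T t) (at t)"
    apply (rule DERIV_cong[OF DERIV_add[OF DERIV_add[OF DERIV_mult[OF DERIV_mult[OF DERIV_ident
            DERIV_diff[OF DERIV_ident DERIV_const]] inv_lin_deriv[OF v]]
          DERIV_cmult[OF DERIV_ident]] DERIV_cmult[OF ln_lin_deriv[OF v]]]])
    unfolding phiH_def using v T
    by (simp add: divide_simps power2_eq_square power3_eq_cube) (simp add: algebra_simps)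
  then show ?thesis by (simp add: PhiH_def[abs_def] mult.commute)
qed

lemma PhiW_increment:
  assumes T: "0 < T" "T < 1"
  shows "PhiW T 1 - PhiW T (-1) = (1 - T^2) / T^3 * (2 * ln ((1+T)/(1-T)) - 4*T)"
proof -
  have e: "ln ((1+T)/(1-T)) = ln (1+T) - ln (1-T)" using T by (simp add: ln_div)
  have n: "1 - T \<noteq> 0" "1 + T \<noteq> 0" using T by auto
  have "PhiW T 1 - PhiW T (-1) = (1-T^2)/T^3 *
      (((T^2-1)/(1-T) - (T^2-1)/(1+T)) - 2*ln(1-T) + 2*ln(1+T) - 2*T)"
    by (simp add: PhiW_def algebra_simps diff_divide_distrib add_divide_distrib)
  moreover have "(T^2 - 1) / (1 - T) - (T^2 - 1) / (1 + T) = -2*T" using n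
    by (simp add: divide_simps power2_eq_square) (simp add: algebra_simps)
  ultimately show ?thesis unfolding e by (simp add: algebra_simps)
qed

lemma PhiH_increment:
  assumes T: "0 < T" "T < 1"
  shows "PhiH T 1 - PhiH T (-1) = 4 / T - 2 * ((1 - T^2) / T^2) * ln ((1+T)/(1-T))"
proof -
  have e: "ln ((1+T)/(1-T)) = ln (1+T) - ln (1-T)" using T by (simp add: ln_div)
  have n: "1 - T \<noteq> 0" "1 + T \<noteq> 0" using T by auto
  show ?thesis unfolding PhiH_def e using n T
    by (simp add: field_simps power2_eq_square power3_eq_cube)
qed

lemma antiderivatives_continuous:
  assumes "0 < T" "T < 1"
  shows "continuous_on {-1..1} (PhiW T)" "continuous_on {-1..1} (PhiH T)"
    "continuous_on {-1<..<1} (phiW T)" "continuous_on {-1<..<1} (phiH T)"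
proof -
  have p: "\<forall>t\<in>{-1..1}. 1 - T*t > 0 \<and> 1 - t*T > 0"
    using one_minus_prod_pos[OF assms] by (auto simp: mult.commute)
  then have p': "\<forall>t\<in>{-1<..<1}. 1 - t*T > 0" by auto
  show "continuous_on {-1..1} (PhiW T)" "continuous_on {-1..1} (PhiH T)"
    unfolding PhiW_def[abs_def] PhiH_def[abs_def] by (intro continuous_intros; use p assms in force)+
  show "continuous_on {-1<..<1} (phiW T)"
    unfolding phiW_def[abs_def] by (intro continuous_intros) (use p' in force)
  show "continuous_on {-1<..<1} (phiH T)"
    unfolding phiH_def[abs_def] by (intro continuous_intros) (use p' in force)
qed

lemma phiW_nonneg: assumes "0 < T" "T < 1" "-1 < t" "t < 1" shows "0 \<le> phiW T t"
proof -
  have "t^2 \<le> 1" "T^2 \<le> 1" using assms by (auto simp: abs_square_le_1)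
  then show ?thesis unfolding phiW_def by simp
qed

lemma phiH_nonneg: assumes "0 < T" "T < 1" "-1 < t" "t < 1" shows "0 \<le> phiH T t"
proof -
  have "t*T \<le> \<bar>t\<bar>*T" using assms by (simp add: mult_right_mono)
  also have "\<dots> \<le> \<bar>t\<bar>" using assms by (simp add: mult_left_le)
  finally have "0 \<le> 1 + t^2 - 2*t*T"
    using zero_le_power2[of "1 - \<bar>t\<bar>"] by (simp add: power2_eq_square algebra_simps)
  then show ?thesis unfolding phiH_def using assms by simp
qed

lemma tanh_double_bounds: "k > 0 \<Longrightarrow> a > 0 \<Longrightarrow> 0 < tanh (2*k*a) \<and> tanh (2*k*a) < (1::real)"
  using tanh_real_bounds[of "2*k*a"] by auto

lemma Wker_integral:
  assumes k: "k > 0" and a: "a > 0"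
  defines "T \<equiv> tanh (2*k*a)"
  shows "integrable lborel (Wker k a)"
    "(\<integral>x. Wker k a x \<partial>lborel) = (1 - T^2) / T^3 * (8*k*a - 4*T) / k"
proof -
  have T: "0 < T" "T < 1" unfolding T_def using tanh_double_bounds[OF k a] by auto
  note r = integral_tanh_substitution[OF k PhiW_deriv[OF T] antiderivatives_continuous(1,3)[OF T]
      phiW_nonneg[OF T], of "k*a"]
  have form: "Wker k a = (\<lambda>x. sech (k*x+k*a)^2 * phiW T (tanh (k*x+k*a)))"
    by (simp add: fun_eq_iff Wker_tanh_form T_def)
  show "integrable lborel (Wker k a)" using r(1) by (simp add: form)
  have "ln ((1+T)/(1-T)) = 4*k*a" unfolding T_def using ln_ratio_tanh[of "2*k*a"] by simp
  then show "(\<integral>x. Wker k a x \<partial>lborel) = (1 - T^2) / T^3 * (8*k*a - 4*T) / k"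
    using r(2) by (simp add: form PhiW_increment[OF T])
qed

lemma Hker_integral:
  assumes k: "k > 0" and a: "a > 0"
  defines "T \<equiv> tanh (2*k*a)"
  shows "integrable lborel (Hker k a)"
    "(\<integral>x. Hker k a x \<partial>lborel) = (4 / T - 2 * ((1 - T^2) / T^2) * (4*k*a)) / k"
proof -
  have T: "0 < T" "T < 1" unfolding T_def using tanh_double_bounds[OF k a] by auto
  note r = integral_tanh_substitution[OF k PhiH_deriv[OF T] antiderivatives_continuous(2,4)[OF T]
      phiH_nonneg[OF T], of "k*a"]
  have form: "Hker k a = (\<lambda>x. sech (k*x+k*a)^2 * phiH T (tanh (k*x+k*a)))"
    by (simp add: fun_eq_iff Hker_tanh_form T_def)
  show "integrable lborel (Hker k a)" using r(1) by (simp add: form)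
  have "ln ((1+T)/(1-T)) = 4*k*a" unfolding T_def using ln_ratio_tanh[of "2*k*a"] by simp
  then show "(\<integral>x. Hker k a x \<partial>lborel) = (4 / T - 2 * ((1 - T^2) / T^2) * (4*k*a)) / k"
    using r(2) by (simp add: form PhiH_increment[OF T])
qed

section \<open>Expansion of the kernel masses in E = exp (-4ka)\<close>

text \<open>With T = (1-E)/(1+E), the exact mass of H is 4(1 + O(E + cE)), where c = ka.\<close>
lemma H_mass_expansion:
  fixes E c T :: real
  assumes E: "0 < E" "E \<le> 1/100" and T: "T = (1 - E)/(1 + E)" and c: "c \<ge> 0"
  shows "\<exists>\<sigma>. 4 / T - 2 * ((1 - T^2) / T^2) * (4*c) = 4*(1+\<sigma>) \<and> \<bar>\<sigma>\<bar> \<le> 3*E + 9*c*E"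
proof (intro exI conjI)
  have n: "1 - E > 0" "1 + E > 0" using E by auto
  have i1: "4 / T = 4 + 8*E/(1-E)" unfolding T using n by (simp add: field_simps)
  have i2: "(1 - T^2) / T^2 = 4*E/(1-E)^2" unfolding T using n
    by (simp add: power_divide divide_simps) (simp add: power2_eq_square algebra_simps)
  show "4 / T - 2 * ((1 - T^2) / T^2) * (4*c) = 4*(1+(2*E/(1-E) - 8*c*E/(1-E)^2))"
    unfolding i1 i2 by (simp add: algebra_simps)
  have a1: "2*E/(1-E) \<le> 3*E" using E n by (simp add: field_simps)
  have "(1-E)^2 \<ge> (99/100)^2" using E by (intro power_mono) auto
  then have "8/(1-E)^2 \<le> 9" using n by (simp add: divide_le_eq power2_eq_square)
  then have "(c*E) * (8/(1-E)^2) \<le> (c*E) * 9" using c E by (intro mult_left_mono) auto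
  then have a2: "8*c*E/(1-E)^2 \<le> 9*c*E" by (simp add: algebra_simps)
  have "0 \<le> 2*E/(1-E)" "0 \<le> 8*c*E/(1-E)^2" using E c n by auto
  then show "\<bar>2*E/(1-E) - 8*c*E/(1-E)^2\<bar> \<le> 3*E + 9*c*E" using a1 a2 by linarith
qed

lemma cube_ratio_bounds:
  fixes E :: real
  assumes E: "0 < E" "E \<le> 1/100"
  shows "(1-E)^3 \<ge> 2/3" "0 \<le> (1+E)/(1-E)^3 - 1" "(1+E)/(1-E)^3 - 1 \<le> 6*E"
proof -
  have "(1-E)^3 \<ge> (99/100)^3" using E by (intro power_mono) auto
  then show c3: "(1-E)^3 \<ge> 2/3" by (simp add: power3_eq_cube)
  have b0: "(1+E) - (1-E)^3 = 4*E - E^2*(3 - E)"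
    by (simp add: power3_eq_cube power2_eq_square algebra_simps)
  have "E^2*(3-E) \<le> E * (3-E)" using E by (intro mult_right_mono) (auto simp: power2_eq_square)
  moreover have "0 \<le> E^2*(3 - E)" "E*(3-E) \<le> 4*E" using E by (simp_all add: algebra_simps)
  ultimately have b1: "(1+E) - (1-E)^3 \<le> 4*E" "0 \<le> (1+E) - (1-E)^3"
    unfolding b0 by linarith+
  have p: "(1-E)^3 > 0" using E by simp
  have "(1+E)/(1-E)^3 - 1 = ((1+E) - (1-E)^3)/(1-E)^3" using p by (simp add: field_simps)
  moreover have "6*E*(2/3) \<le> 6*E*(1-E)^3" using c3 E by (intro mult_left_mono) auto
  ultimately show "0 \<le> (1+E)/(1-E)^3 - 1" "(1+E)/(1-E)^3 - 1 \<le> 6*E"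
    using b1 p by (simp_all add: divide_le_eq)
qed

text \<open>With T = (1-E)/(1+E) and c = ka \<ge> 1, the exact mass of W is 16E(2c - 1)(1 + O(E)).\<close>
lemma W_mass_expansion:
  fixes E c T :: real
  assumes E: "0 < E" "E \<le> 1/100" and T: "T = (1 - E)/(1 + E)" and c: "c \<ge> 1"
  shows "\<exists>\<tau>. (1 - T^2) / T^3 * (8*c - 4*T) = 16*E*(2*c-1)*(1+\<tau>) \<and> 0 \<le> \<tau> \<and> \<tau> \<le> 9*E"
proof (intro exI conjI)
  define d where "d = (1-E)^3"
  note cube = cube_ratio_bounds[OF E, folded d_def]
  have n: "1 - E > 0" "1 + E > 0" "2*c - 1 > 0" "d > 0" using E c cube(1) by auto
  define \<tau> where "\<tau> = (1+E)/d - 1 + 2*E/(d*(2*c-1))"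
  have i2: "(1 - T^2) / T^3 = 4*E*(1+E)/d" unfolding T d_def using n
    by (simp add: power_divide divide_simps) (simp add: power2_eq_square power3_eq_cube algebra_simps)
  have h3: "8*c - 4*T = 4*(2*c*(1+E) - (1-E))/(1+E)" unfolding T using n by (simp add: field_simps)
  have cancel: "y \<noteq> 0 \<Longrightarrow> 4*E*y/d * (4*X/y) = 16*E*X/d" for y X :: real
    by (simp add: field_simps)
  have "(1 - T^2) / T^3 * (8*c - 4*T) = 16*E*(2*c*(1+E) - (1-E))/d"
    unfolding i2 h3 using n by (intro cancel) auto
  also have "\<dots> = 16*E*(2*c-1)*(1+\<tau>)" unfolding \<tau>_def using n by (simp add: field_simps)
  finally show "(1 - T^2) / T^3 * (8*c - 4*T) = 16*E*(2*c-1)*(1+\<tau>)" .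
  have "(2/3)*1 \<le> d*(2*c-1)" using cube(1) c by (intro mult_mono) auto
  then have t2: "2*E/(d*(2*c-1)) \<le> 3*E" using E n by (simp add: divide_le_eq)
  have "0 \<le> 2*E/(d*(2*c-1))" using E n by simp
  then show "0 \<le> \<tau>" "\<tau> \<le> 9*E" unfolding \<tau>_def using cube(2,3) t2 by linarith+
qed

lemma tanh_double_via_E: "tanh (2*c) = (1 - exp (-4*c)) / (1 + exp (-4*c))" for c :: real
  using tanh_real_altdef[of "2*c"] by simp

lemma Hker_mass:
  assumes k: "k > 0" and a: "a > 0" and E: "exp (-4*k*a) \<le> 1/100"
  shows "\<exists>\<sigma>. (\<integral>x. Hker k a x \<partial>lborel) = 4/k * (1+\<sigma>)
      \<and> \<bar>\<sigma>\<bar> \<le> 3*exp (-4*k*a) + 9*(k*a)*exp (-4*k*a)"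
proof -
  have T: "tanh (2*(k*a)) = (1 - exp (-4*k*a)) / (1 + exp (-4*k*a))"
    using tanh_double_via_E[of "k*a"] by (simp add: mult.assoc)
  obtain \<sigma> where \<sigma>: "4 / tanh (2*(k*a)) - 2 * ((1 - tanh (2*(k*a))^2) / tanh (2*(k*a))^2) * (4*(k*a))
      = 4*(1+\<sigma>)" "\<bar>\<sigma>\<bar> \<le> 3*exp (-4*k*a) + 9*(k*a)*exp (-4*k*a)"
    using H_mass_expansion[OF exp_gt_zero E T] k a by (meson less_imp_le mult_pos_pos)
  then show ?thesis using Hker_integral(2)[OF k a] by (auto simp: mult.assoc)
qed

lemma Wker_mass:
  assumes k: "k > 0" and a: "a > 0" and ka: "k*a \<ge> 1" and E: "exp (-4*k*a) \<le> 1/100"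
  shows "\<exists>\<tau>. (\<integral>x. Wker k a x \<partial>lborel) = 1/k * (16*exp (-4*k*a)*(2*(k*a)-1)) * (1+\<tau>)
      \<and> 0 \<le> \<tau> \<and> \<tau> \<le> 9*exp (-4*k*a)"
proof -
  have T: "tanh (2*(k*a)) = (1 - exp (-4*k*a)) / (1 + exp (-4*k*a))"
    using tanh_double_via_E[of "k*a"] by (simp add: mult.assoc)
  obtain \<tau> where "(1 - tanh (2*(k*a))^2) / tanh (2*(k*a))^3 * (8*(k*a) - 4*tanh (2*(k*a)))
      = 16*exp (-4*k*a)*(2*(k*a)-1)*(1+\<tau>)" "0 \<le> \<tau>" "\<tau> \<le> 9*exp (-4*k*a)"
    using W_mass_expansion[OF exp_gt_zero E T ka] by auto
  then show ?thesis using Wker_integral(2)[OF k a] by (auto simp: mult.assoc)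
qed

section \<open>Second moments of the kernels\<close>

lemma kernels_continuous: "continuous_on UNIV (Hker k a)" "continuous_on UNIV (Wker k a)"
  unfolding Hker_def[abs_def] Wker_def[abs_def] sech_def
  by (intro continuous_intros; simp add: cosh_nonzero)+

lemma kernels_measurable: "Hker k a \<in> borel_measurable borel" "Wker k a \<in> borel_measurable borel"
  using kernels_continuous borel_measurable_continuous_onI by blast+

lemma Hker_nonneg: assumes "k > 0" "a > 0" shows "0 \<le> Hker k a x"
  using phiH_nonneg tanh_double_bounds[OF assms] tanh_real_bounds[of "k*x+k*a"]
  by (simp add: Hker_tanh_form)

lemma Hker_le: "Hker k a x \<le> sech (k*x+k*a)^2 + sech (k*x-k*a)^2"
proof -
  have "tanh (k*x+k*a) * sech (k*x-k*a)^2 \<le> 1 * sech (k*x-k*a)^2"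
    using tanh_real_bounds[of "k*x+k*a"] by (intro mult_right_mono) auto
  moreover have "- tanh (k*x-k*a) * sech (k*x+k*a)^2 \<le> 1 * sech (k*x+k*a)^2"
    using tanh_real_bounds[of "k*x-k*a"] by (intro mult_right_mono) auto
  ultimately show ?thesis unfolding Hker_def by simp
qed

lemma sech2_moment:
  assumes k: "k > 0"
  shows "x^2 * sech (k*x-k*a)^2 \<le> 2*a^2 * sech (k*x-k*a)^2 + 32/k^2 * sech ((k/2)*x-(k/2)*a)^2"
proof -
  have "x^2 \<le> 2*a^2 + 2*(x-a)^2"
    using zero_le_power2[of "x - 2*a"] by (simp add: power2_eq_square algebra_simps)
  then have "x^2 * sech (k*x-k*a)^2 \<le> (2*a^2 + 2*(x-a)^2) * sech (k*x-k*a)^2"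
    by (intro mult_right_mono) auto
  also have "(x-a)^2 = (k*x-k*a)^2 / k^2" using k by (simp add: power2_eq_square field_simps)
  also have "(k*x-k*a)^2 / k^2 * sech (k*x-k*a)^2 \<le> 16 * sech ((k*x-k*a)/2)^2 / k^2"
    using sq_sech2_bound[of "k*x-k*a"] k by (simp add: divide_right_mono)
  then have "(2*a^2 + 2*((k*x-k*a)^2 / k^2)) * sech (k*x-k*a)^2
      \<le> 2*a^2 * sech (k*x-k*a)^2 + 2 * (16 * sech ((k*x-k*a)/2)^2 / k^2)"
    by (simp add: algebra_simps)
  also have "(k*x-k*a)/2 = (k/2)*x-(k/2)*a" by (simp add: field_simps)
  finally show ?thesis by simp
qed

lemma Hker_second_moment:
  assumes k: "k > 0" and a: "a > 0"
  shows "integrable lborel (\<lambda>x. x^2 * Hker k a x)"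
    "(\<integral>x. x^2 * Hker k a x \<partial>lborel) \<le> 8*a^2/k + 256/k^3"
proof -
  define R where "R x = 2*a^2 * (sech (k*x+k*a)^2 + sech (k*x-k*a)^2)
     + 32/k^2 * (sech ((k/2)*x+(k/2)*a)^2 + sech ((k/2)*x-(k/2)*a)^2)" for x
  have k2: "k/2 > 0" using k by simp
  note sech_ints = integral_sech2[OF k, of "k*a"] integral_sech2_minus[OF k, of "k*a"]
    integral_sech2[OF k2, of "(k/2)*a"] integral_sech2_minus[OF k2, of "(k/2)*a"]
  have iR: "integrable lborel R" unfolding R_def using sech_ints by auto
  have "(\<integral>x. R x \<partial>lborel) = 2*a^2 * (2/k + 2/k) + 32/k^2 * (2/(k/2) + 2/(k/2))"
    unfolding R_def using sech_ints by (simp add: integral_add)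
  also have "\<dots> = 8*a^2/k + 256/k^3" using k by (simp add: field_simps power3_eq_cube power2_eq_square)
  finally have vR: "(\<integral>x. R x \<partial>lborel) = 8*a^2/k + 256/k^3" .
  have pt: "x^2 * Hker k a x \<le> R x" for x
  proof -
    have "x^2 * Hker k a x \<le> x^2 * (sech (k*x+k*a)^2 + sech (k*x-k*a)^2)"
      using Hker_le by (intro mult_left_mono) auto
    then show ?thesis
      using sech2_moment[OF k, of x a] sech2_moment[OF k, of x "-a"] by (simp add: R_def algebra_simps)
  qed
  show i2: "integrable lborel (\<lambda>x. x^2 * Hker k a x)"
    by (rule Bochner_Integration.integrable_bound[OF iR])
      (use kernels_measurable pt Hker_nonneg[OF k a] in \<open>auto intro!: borel_measurable_times AE_I2 order_trans[OF _ abs_ge_self]\<close>)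
  show "(\<integral>x. x^2 * Hker k a x \<partial>lborel) \<le> 8*a^2/k + 256/k^3"
    unfolding vR[symmetric] by (rule integral_mono[OF i2 iR]) (use pt in auto)
qed

lemma Wker_moment_outside:
  assumes k: "k > 0" and a: "a > 0" and x: "x > a"
  shows "x^2 * Wker k a x \<le> 32 * exp (-4*k*a) * (a^2 + 1/k^2) * sech (k*x-k*a)^2"
proof -
  define t where "t = k*(x-a)"
  have t: "t > 0" using k x by (simp add: t_def)
  have "\<bar>k*x+k*a\<bar> = t + 2*k*a" using k a x t by (simp add: t_def algebra_simps)
  then have P: "sech (k*x+k*a)^2 \<le> 4*exp(-2*t)*exp(-4*k*a)"
    using sech2_upper[of "k*x+k*a"] by (simp add: exp_add[symmetric] algebra_simps)
  have aq: "\<bar>k*x-k*a\<bar> = t" using t by (simp add: t_def algebra_simps)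
  have Q: "sech (k*x-k*a)^2 \<le> 4*exp(-2*t)" "exp(-2*t) \<le> sech (k*x-k*a)^2"
    using sech2_upper[of "k*x-k*a"] sech2_lower[of "k*x-k*a"] aq by auto
  have xe: "x = a + t/k" using k by (simp add: t_def field_simps)
  have "(a + t/k)^2 + (a - t/k)^2 = 2*a^2 + 2*(t/k)^2" by (simp add: power2_eq_square algebra_simps)
  then have "(a + t/k)^2 \<le> 2*a^2 + 2*(t/k)^2" using zero_le_power2[of "a - t/k"] by linarith
  then have hx: "x^2 \<le> 2*a^2 + 2*(t^2/k^2)" unfolding xe by (simp add: power_divide)
  have ht: "t^2 * exp(-2*t) \<le> 1" using sq_exp_bound[of t] t by simp
  have e1: "exp(-2*t) \<le> 1" using t by simp
  have "x^2 * Wker k a x \<le> (2*a^2 + 2*(t^2/k^2)) * ((4*exp(-2*t)*exp(-4*k*a)) * (4*exp(-2*t)))"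
    unfolding Wker_def using hx P Q(1) by (intro mult_mono) auto
  also have "\<dots> = 32*exp(-4*k*a)*exp(-2*t)*(a^2*exp(-2*t) + (t^2*exp(-2*t))/k^2)"
    by (simp add: algebra_simps)
  also have "\<dots> \<le> 32*exp(-4*k*a)*exp(-2*t)*(a^2*1 + 1/k^2)"
    using ht e1 k by (intro mult_left_mono add_mono divide_right_mono) auto
  also have "\<dots> = 32 * exp (-4*k*a) * (a^2 + 1/k^2) * exp(-2*t)" by simp
  also have "\<dots> \<le> 32 * exp (-4*k*a) * (a^2 + 1/k^2) * sech (k*x-k*a)^2"
    using Q(2) by (intro mult_left_mono) auto
  finally show ?thesis .
qed

lemma Wker_moment_pointwise:
  assumes k: "k > 0" and a: "a > 0"
  shows "x^2 * Wker k a x \<le> a^2 * Wker k a x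
     + 32 * exp (-4*k*a) * (a^2 + 1/k^2) * (sech (k*x+k*a)^2 + sech (k*x-k*a)^2)"
proof -
  have nn: "0 \<le> 32 * exp (-4*k*a) * (a^2 + 1/k^2)" "0 \<le> Wker k a x" by (simp_all add: Wker_def)
  have "k*(-x)+k*a = -(k*x-k*a)" "k*(-x)-k*a = -(k*x+k*a)" by (simp_all add: algebra_simps)
  then have sym: "Wker k a (-x) = Wker k a x" "sech (k*(-x)-k*a) = sech (k*x+k*a)"
    unfolding Wker_def by (simp_all only: sech_even mult.commute)
  consider "x > a" | "x < -a" | "\<bar>x\<bar> \<le> a" by linarith
  then show ?thesis
  proof cases
    case 1
    then show ?thesis using Wker_moment_outside[OF k a 1] nn
      by (smt (verit) mult_left_mono mult_nonneg_nonneg zero_le_power2)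
  next
    case 2
    then show ?thesis using Wker_moment_outside[OF k a, of "-x"] nn sym
      by (smt (verit) mult_left_mono mult_nonneg_nonneg zero_le_power2 power2_minus)
  next
    case 3
    then have "x^2 \<le> a^2" by (metis abs_ge_zero power2_abs power_mono)
    then show ?thesis using nn
      by (smt (verit) mult_right_mono mult_nonneg_nonneg zero_le_power2)
  qed
qed

lemma Wker_second_moment:
  assumes k: "k > 0" and a: "a > 0"
  shows "integrable lborel (\<lambda>x. x^2 * Wker k a x)"
    "(\<integral>x. x^2 * Wker k a x \<partial>lborel)
       \<le> a^2 * (\<integral>x. Wker k a x \<partial>lborel) + 128 * exp (-4*k*a) * (a^2 + 1/k^2) / k"
proof -
  define R where "R x = a^2 * Wker k a x
     + 32 * exp (-4*k*a) * (a^2 + 1/k^2) * (sech (k*x+k*a)^2 + sech (k*x-k*a)^2)" for x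
  note ints = Wker_integral(1)[OF k a] integral_sech2[OF k, of "k*a"] integral_sech2_minus[OF k, of "k*a"]
  have iR: "integrable lborel R" unfolding R_def using ints by auto
  have vR: "(\<integral>x. R x \<partial>lborel) = a^2 * (\<integral>x. Wker k a x \<partial>lborel) + 128 * exp (-4*k*a) * (a^2 + 1/k^2) / k"
    unfolding R_def using ints by (simp add: integral_add)
  have pt: "x^2 * Wker k a x \<le> R x" for x using Wker_moment_pointwise[OF k a] unfolding R_def .
  have nn: "0 \<le> Wker k a x" for x by (simp add: Wker_def)
  show i2: "integrable lborel (\<lambda>x. x^2 * Wker k a x)"
    by (rule Bochner_Integration.integrable_bound[OF iR])
      (use kernels_measurable pt nn in \<open>auto intro!: borel_measurable_times AE_I2 order_trans[OF _ abs_ge_self]\<close>)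
  show "(\<integral>x. x^2 * Wker k a x \<partial>lborel)
       \<le> a^2 * (\<integral>x. Wker k a x \<partial>lborel) + 128 * exp (-4*k*a) * (a^2 + 1/k^2) / k"
    unfolding vR[symmetric] by (rule integral_mono[OF i2 iR]) (use pt in auto)
qed

section \<open>Weighted averages against a concentrated kernel\<close>

lemma kernel_average:
  fixes f w :: "real \<Rightarrow> real" and L a \<delta> m :: real
  assumes w_int: "integrable lborel w" and w_nn: "\<And>x. 0 \<le> w x"
    and w_meas: "w \<in> borel_measurable borel" and f_meas: "f \<in> borel_measurable borel"
    and mom_int: "integrable lborel (\<lambda>x. x^2 * w x)"
    and mom: "(\<integral>x. x^2 * w x \<partial>lborel) \<le> m * (\<integral>x. w x \<partial>lborel)"
    and mass: "(\<integral>x. w x \<partial>lborel) > 0" and L: "L \<ge> 3/4"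
    and dev: "\<And>x. \<bar>f x - L\<bar> \<le> x^2 + a^2 + \<delta>"
  shows "\<exists>\<rho>. (\<integral>x. f x * w x \<partial>lborel) = L * (\<integral>x. w x \<partial>lborel) * (1+\<rho>)
            \<and> \<bar>\<rho>\<bar> \<le> 4/3 * (m + a^2 + \<delta>)"
proof -
  define M where "M = (\<integral>x. w x \<partial>lborel)"
  define D where "D = m + a^2 + \<delta>"
  define g where "g x = (x^2 + a^2 + \<delta>) * w x" for x
  have g_int: "integrable lborel g" unfolding g_def using mom_int w_int by (auto simp: distrib_right)
  have "(\<integral>x. g x \<partial>lborel) = (\<integral>x. x^2 * w x \<partial>lborel) + (a^2 + \<delta>) * M"
    unfolding g_def M_def using mom_int w_int by (simp add: distrib_right)
  then have g_le: "(\<integral>x. g x \<partial>lborel) \<le> D * M" using mom unfolding D_def M_def by (simp add: algebra_simps)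
  have bound: "\<bar>f x * w x\<bar> \<le> \<bar>L\<bar> * w x + g x" for x
  proof -
    have "\<bar>f x\<bar> \<le> \<bar>L\<bar> + (x^2 + a^2 + \<delta>)" using dev[of x] by linarith
    then have "\<bar>f x\<bar> * w x \<le> (\<bar>L\<bar> + (x^2 + a^2 + \<delta>)) * w x" by (rule mult_right_mono[OF _ w_nn])
    then show ?thesis using w_nn[of x] unfolding g_def by (simp add: abs_mult algebra_simps)
  qed
  have fw_int: "integrable lborel (\<lambda>x. f x * w x)"
    by (rule Bochner_Integration.integrable_bound[where f="\<lambda>x. \<bar>L\<bar> * w x + g x"])
      (use w_int g_int f_meas w_meas bound in \<open>auto intro!: borel_measurable_times AE_I2
        order_trans[OF bound abs_ge_self] simp: measurable_lborel1\<close>)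
  have "(\<integral>x. f x * w x \<partial>lborel) - L * M = (\<integral>x. (f x - L) * w x \<partial>lborel)"
    unfolding M_def using fw_int w_int by (simp add: left_diff_distrib)
  also have "\<bar>\<dots>\<bar> \<le> (\<integral>x. g x \<partial>lborel)"
  proof (rule integral_abs_bound_integral)
    show "integrable lborel (\<lambda>x. (f x - L) * w x)"
      using fw_int w_int by (simp add: left_diff_distrib)
  qed (use g_int[unfolded g_def] dev w_nn in \<open>auto simp: g_def abs_mult intro!: mult_right_mono\<close>)
  finally have err: "\<bar>(\<integral>x. f x * w x \<partial>lborel) - L * M\<bar> \<le> D * M" using g_le by linarith
  have M: "M > 0" using mass unfolding M_def .
  have D: "D \<ge> 0" using err M zero_le_mult_iff[of D M] by linarith
  define \<rho> where "\<rho> = ((\<integral>x. f x * w x \<partial>lborel) - L * M) / (L * M)"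
  have "(\<integral>x. f x * w x \<partial>lborel) = L * M * (1 + \<rho>)" using M L by (simp add: \<rho>_def field_simps)
  moreover have "\<bar>\<rho>\<bar> \<le> 4/3 * D"
  proof -
    have LM: "L * M > 0" using M L by simp
    have "\<bar>\<rho>\<bar> = \<bar>(\<integral>x. f x * w x \<partial>lborel) - L * M\<bar> / (L * M)"
      unfolding \<rho>_def using LM by (simp add: abs_div)
    also have "\<dots> \<le> D * M / (L * M)" using err LM by (intro divide_right_mono) auto
    also have "\<dots> \<le> 4/3 * D" using M L D by (simp add: field_simps mult_left_mono)
    finally show ?thesis .
  qed
  ultimately show ?thesis unfolding M_def D_def by (intro exI[of _ \<rho>]) auto
qed

lemma relative_error_compose:
  fixes X Y Z r u :: real
  assumes "X = Y*(1+r)" "Y = Z*(1+u)" "\<bar>u\<bar> \<le> 1"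
  shows "X = Z*(1+(r+u+r*u)) \<and> \<bar>r+u+r*u\<bar> \<le> 2*\<bar>r\<bar> + \<bar>u\<bar>"
proof
  show "X = Z*(1+(r+u+r*u))" using assms by (simp add: algebra_simps)
  have "\<bar>r*u\<bar> \<le> \<bar>r\<bar>" using assms(3) by (simp add: abs_mult mult_left_le)
  then show "\<bar>r+u+r*u\<bar> \<le> 2*\<bar>r\<bar> + \<bar>u\<bar>" by linarith
qed

lemma one_minus_sq_ge: "0 < a \<Longrightarrow> a \<le> 1/2 \<Longrightarrow> 1 - a^2 \<ge> (3/4::real)"
  using power_mono[of a "1/2" 2] by (simp add: power2_eq_square)

lemma Hker_average:
  fixes f :: "real \<Rightarrow> real" and k a \<delta> :: real
  assumes k: "k > 0" and a: "0 < a" "a \<le> 1/2" and E: "exp (-4*k*a) \<le> 1/100"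
    and cE: "3*exp (-4*k*a) + 9*(k*a)*exp (-4*k*a) \<le> 1/2"
    and fm: "f \<in> borel_measurable borel"
    and fb: "\<And>x. \<bar>f x - (1-a^2)\<bar> \<le> x^2 + a^2 + \<delta>"
  shows "\<exists>r. (\<integral>x. f x * Hker k a x \<partial>lborel) = 4/k*(1-a^2)*(1+r) \<and>
     \<bar>r\<bar> \<le> 3*(5*a^2 + 128/k^2 + \<delta>) + 3*exp (-4*k*a) + 9*(k*a)*exp (-4*k*a)"
proof -
  define M where "M = (\<integral>x. Hker k a x \<partial>lborel)"
  obtain \<sigma> where \<sigma>: "M = 4/k * (1+\<sigma>)" "\<bar>\<sigma>\<bar> \<le> 3*exp (-4*k*a) + 9*(k*a)*exp (-4*k*a)"
    using Hker_mass[OF k a(1) E] unfolding M_def by blast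
  have "4/k * (1/2) \<le> 4/k * (1+\<sigma>)" using \<sigma>(2) cE k by (intro mult_left_mono) auto
  then have M_low: "M \<ge> 2/k" using \<sigma>(1) by simp
  have "8*a^2/k + 256/k^3 = (4*a^2 + 128/k^2) * (2/k)" using k by (simp add: field_simps power3_eq_cube power2_eq_square)
  also have "\<dots> \<le> (4*a^2 + 128/k^2) * M" using M_low by (intro mult_left_mono) auto
  finally have mom: "(\<integral>x. x^2 * Hker k a x \<partial>lborel) \<le> (4*a^2 + 128/k^2) * M"
    using Hker_second_moment(2)[OF k a(1)] by linarith
  have "M > 0" using M_low k by (smt (verit) divide_pos_pos)
  then obtain \<rho> where \<rho>: "(\<integral>x. f x * Hker k a x \<partial>lborel) = (1-a^2) * M * (1+\<rho>)"
      "\<bar>\<rho>\<bar> \<le> 4/3 * ((4*a^2 + 128/k^2) + a^2 + \<delta>)"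
    using kernel_average[OF Hker_integral(1)[OF k a(1)] Hker_nonneg[OF k a(1)] kernels_measurable(1) fm
        Hker_second_moment(1)[OF k a(1)] mom[unfolded M_def] _ one_minus_sq_ge[OF a] fb]
    unfolding M_def by blast
  have "(1-a^2) * M = (4/k*(1-a^2)) * (1+\<sigma>)" unfolding \<sigma>(1) by (simp only: mult_ac)
  from relative_error_compose[OF \<rho>(1) this] \<sigma>(2) cE
  show ?thesis using \<rho>(2) by (intro exI[of _ "\<rho>+\<sigma>+\<rho>*\<sigma>"]) auto
qed

lemma Wker_average:
  fixes f :: "real \<Rightarrow> real" and k a \<delta> :: real
  assumes k: "k > 0" and a: "0 < a" "a \<le> 1/2" and ka: "k*a \<ge> 1" and E: "exp (-4*k*a) \<le> 1/100"
    and fm: "f \<in> borel_measurable borel"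
    and fb: "\<And>x. \<bar>f x - (1-a^2)\<bar> \<le> x^2 + a^2 + \<delta>"
  shows "\<exists>r. (\<integral>x. f x * Wker k a x \<partial>lborel)
        = 1/k*(1-a^2)*(16*exp (-4*k*a)*(2*(k*a)-1))*(1+r) \<and>
     \<bar>r\<bar> \<le> 3*(10*a^2 + 8/k^2 + \<delta>) + 9*exp (-4*k*a)"
proof -
  define E where "E = exp (-4*k*a)"
  define M where "M = (\<integral>x. Wker k a x \<partial>lborel)"
  obtain \<tau> where \<tau>: "M = 1/k * (16*E*(2*(k*a)-1)) * (1+\<tau>)" "0 \<le> \<tau>" "\<tau> \<le> 9*E"
    using Wker_mass[OF k a(1) ka E] unfolding M_def E_def by blast
  have E0: "E > 0" unfolding E_def by simp
  have "0 \<le> (2*(k*a)-1)*\<tau>" using ka \<tau>(2) by simp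
  then have "1 \<le> (2*(k*a)-1)*(1+\<tau>)" using ka by (simp add: algebra_simps)
  then have "16*E/k * 1 \<le> 16*E/k * ((2*(k*a)-1)*(1+\<tau>))" using E0 k by (intro mult_left_mono) auto
  then have M_low: "16*E/k \<le> M" using \<tau>(1) by simp
  have "128 * E * (a^2 + 1/k^2) / k = 8 * (a^2 + 1/k^2) * (16*E/k)" by simp
  also have "\<dots> \<le> 8 * (a^2 + 1/k^2) * M" using M_low by (intro mult_left_mono) auto
  finally have "128 * E * (a^2 + 1/k^2) / k \<le> (8*a^2 + 8/k^2) * M" by (simp add: algebra_simps)
  then have mom: "(\<integral>x. x^2 * Wker k a x \<partial>lborel) \<le> (9*a^2 + 8/k^2) * M"
    using Wker_second_moment(2)[OF k a(1)] unfolding M_def E_def by (simp add: algebra_simps)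
  have W_nn: "\<And>x. 0 \<le> Wker k a x" by (simp add: Wker_def)
  have "M > 0" using M_low E0 k by (smt (verit) divide_pos_pos)
  then obtain \<rho> where \<rho>: "(\<integral>x. f x * Wker k a x \<partial>lborel) = (1-a^2) * M * (1+\<rho>)"
      "\<bar>\<rho>\<bar> \<le> 4/3 * ((9*a^2 + 8/k^2) + a^2 + \<delta>)"
    using kernel_average[OF Wker_integral(1)[OF k a(1)] W_nn kernels_measurable(2) fm
        Wker_second_moment(1)[OF k a(1)] mom[unfolded M_def] _ one_minus_sq_ge[OF a] fb]
    unfolding M_def by blast
  have "(1-a^2) * M = (1/k*(1-a^2)*(16*E*(2*(k*a)-1))) * (1+\<tau>)" unfolding \<tau>(1) by (simp only: mult_ac)
  from relative_error_compose[OF \<rho>(1) this] \<tau> E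
  show ?thesis using \<rho>(2) unfolding E_def by (intro exI[of _ "\<rho>+\<tau>+\<rho>*\<tau>"]) auto
qed

section \<open>The expansion for a single small eps\<close>

text \<open>eta_0^2 = 1 - x^2 on (-1, 1), so it is 1 - a^2 up to x^2 + a^2 everywhere; a uniform
  perturbation of size d \<le> 1 of eta_0 adds at most 3d to this deviation.\<close>
lemma eta_sq_deviation:
  fixes u :: "real \<Rightarrow> real" and d a x :: real
  assumes close: "\<bar>u x - eta0 x\<bar> \<le> d" and d: "d \<le> 1"
  shows "\<bar>(u x)^2 - (1 - a^2)\<bar> \<le> x^2 + a^2 + 3*d"
proof -
  have eta0: "0 \<le> eta0 x" "eta0 x \<le> 1" "\<bar>eta0 x ^2 - (1 - a^2)\<bar> \<le> x^2 + a^2"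
  proof (atomize(full), cases "\<bar>x\<bar> < 1")
    case True
    then have "x^2 \<le> 1" by (simp add: abs_square_le_1 less_imp_le)
    then show "0 \<le> eta0 x \<and> eta0 x \<le> 1 \<and> \<bar>eta0 x ^2 - (1 - a^2)\<bar> \<le> x^2 + a^2"
      using True by (simp add: eta0_def abs_le_iff)
  next
    case False
    then have "1 \<le> x^2" using power_mono[of 1 "\<bar>x\<bar>" 2] by simp
    moreover have "1 \<le> 2*a^2 + x^2" using \<open>1 \<le> x^2\<close> zero_le_power2[of a] by linarith
    ultimately show "0 \<le> eta0 x \<and> eta0 x \<le> 1 \<and> \<bar>eta0 x ^2 - (1 - a^2)\<bar> \<le> x^2 + a^2"
      using False by (simp add: eta0_def abs_le_iff)
  qed
  have "\<bar>(u x)^2 - eta0 x ^2\<bar> = \<bar>u x - eta0 x\<bar> * \<bar>u x + eta0 x\<bar>"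
    by (simp add: abs_mult[symmetric] power2_eq_square algebra_simps)
  also have "\<dots> \<le> d * 3"
    using close d eta0(1,2) by (intro mult_mono) (auto simp: abs_le_iff)
  finally show ?thesis using eta0(3) by linarith
qed

lemma exp_small_consequences:
  fixes c \<mu> :: real
  assumes c: "c > 0" and E: "exp (-4*c) \<le> \<mu>^2" and mu: "0 < \<mu>" "\<mu> \<le> 1/100"
  shows "c \<ge> 1" "exp (-4*c) \<le> \<mu>" "c * exp (-4*c) \<le> \<mu>"
proof -
  have Ec: "exp (-4*c) = exp (-2*c) * exp (-2*c)" by (simp add: exp_add[symmetric])
  have "exp (-2*c)^2 \<le> \<mu>^2" using E Ec by (simp add: power2_eq_square)
  then have e2c: "exp (-2*c) \<le> \<mu>" using mu power2_le_imp_le by fastforce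
  have "exp (-2*c) \<le> 1" using c by simp
  then show Emu: "exp (-4*c) \<le> \<mu>" unfolding Ec using e2c mu
    by (smt (verit) exp_gt_zero mult_right_le_one_le)
  have "c \<le> exp (2*c)" using exp_ge_add_one_self[of "2*c"] c by linarith
  then have "c * exp (-2*c) \<le> 1" by (simp add: exp_minus divide_simps)
  then have "c * exp (-4*c) \<le> exp (-2*c)" unfolding Ec
    by (metis exp_gt_zero mult.assoc mult.left_neutral mult_right_mono less_imp_le)
  then show "c * exp (-4*c) \<le> \<mu>" using e2c by linarith
  show "c \<ge> 1"
  proof (rule ccontr)
    assume "\<not> c \<ge> 1"
    then have "exp (-4) < exp (-4*c)" by simp
    have "exp (4::real) = exp 1 ^ 4" using exp_of_nat_mult[of 4 1] by simp
    moreover have "exp 1 ^ 4 \<le> (3::real) ^ 4" using exp_le by (intro power_mono) auto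
    ultimately have "exp (4::real) \<le> 3 ^ 4" by simp
    then have "1/81 \<le> exp (-4::real)" by (simp add: exp_minus field_simps)
    with \<open>exp (-4) < exp (-4*c)\<close> show False using Emu mu by linarith
  qed
qed

lemma fixed_eps_parameters:
  fixes \<epsilon> a b C1 \<beta> :: real
  assumes e: "0 < \<epsilon>" "\<epsilon> < 1"
    and a: "0 < a" "a \<le> 1/2" "a \<le> C1 * \<epsilon> powr (1/6)"
    and b: "\<bar>b\<bar> \<le> \<beta>" "\<beta> < 1"
    and ex: "exp (-4 * Bpar a b * a / \<epsilon>) \<le> (\<epsilon> powr (1/3) / 100)^2"
  defines "k \<equiv> Bpar a b / \<epsilon>"
  shows "k > 0" "a^2 \<le> C1^2 * \<epsilon> powr (1/3)" "1/k^2 \<le> 8/3 * (1/(1-\<beta>^2)) * \<epsilon> powr (1/3)"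
    "k*a \<ge> 1" "exp (-4*k*a) \<le> \<epsilon> powr (1/3) / 100" "(k*a) * exp (-4*k*a) \<le> \<epsilon> powr (1/3) / 100"
proof -
  define tt where "tt = \<epsilon> powr (1/3)"
  have tt: "0 < tt" "tt \<le> 1" unfolding tt_def using e by (auto intro: powr_le1)
  have "a^2 \<le> (C1 * \<epsilon> powr (1/6))^2" using a by (intro power_mono) auto
  also have "\<dots> = C1^2 * (\<epsilon> powr (1/6) * \<epsilon> powr (1/6))" by (simp add: power2_eq_square)
  also have "\<epsilon> powr (1/6) * \<epsilon> powr (1/6) = tt" unfolding tt_def by (simp add: powr_add[symmetric])
  finally show "a^2 \<le> C1^2 * \<epsilon> powr (1/3)" unfolding tt_def .
  have "\<beta> \<ge> 0" using b by linarith
  then have b2: "b^2 \<le> \<beta>^2" "\<beta>^2 < 1"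
    using b power_mono[of "\<bar>b\<bar>" \<beta> 2] power_strict_mono[of \<beta> 1 2] by auto
  have a2: "a^2 \<le> 1/4" using power_mono[of a "1/2" 2] a by (simp add: power2_eq_square)
  have BB: "Bpar a b ^2 = (1 - a^2) * (1 - b^2) / 2" unfolding Bpar_def using a2 b2
    by (simp add: power_mult_distrib real_sqrt_pow2 power_divide)
  have "(3/4) * (1 - \<beta>^2) \<le> (1 - a^2) * (1 - b^2)" using a2 b2 by (intro mult_mono) auto
  then have BBlow: "Bpar a b ^2 \<ge> (3/8) * (1 - \<beta>^2)" unfolding BB by simp
  have Bpos: "Bpar a b > 0" unfolding Bpar_def using a2 b2 by auto
  then show k0: "k > 0" unfolding k_def using e by simp
  have "\<epsilon> powr 2 \<le> \<epsilon> powr (1/3)" using e by (intro powr_mono') auto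
  then have e2: "\<epsilon>^2 \<le> tt" unfolding tt_def using e by (simp add: powr_realpow)
  have "1/k^2 = \<epsilon>^2 / Bpar a b ^2" unfolding k_def using e Bpos by (simp add: power_divide)
  also have "\<dots> \<le> \<epsilon>^2 / ((3/8) * (1 - \<beta>^2))" using BBlow b2 by (intro divide_left_mono mult_pos_pos) auto
  also have "\<dots> \<le> 8/3 * (1/(1-\<beta>^2)) * tt" using e2 b2 by (simp add: divide_right_mono)
  finally show "1/k^2 \<le> 8/3 * (1/(1-\<beta>^2)) * \<epsilon> powr (1/3)" unfolding tt_def .
  have "exp (-4*(k*a)) \<le> (tt/100)^2" using ex e unfolding k_def tt_def by (simp add: algebra_simps)
  note small = exp_small_consequences[OF mult_pos_pos[OF k0 a(1)] this] tt
  show "k*a \<ge> 1" "exp (-4*k*a) \<le> \<epsilon> powr (1/3) / 100" "(k*a) * exp (-4*k*a) \<le> \<epsilon> powr (1/3) / 100"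
    using small unfolding tt_def by (simp_all add: mult.assoc)
qed

lemma K_overlap_kernels:
  fixes \<eta> :: "real \<Rightarrow> real \<Rightarrow> real" and \<epsilon> a b ad bd Bd :: real
  assumes e: "\<epsilon> > 0"
  defines "k \<equiv> Bpar a b / \<epsilon>"
  shows "K_overlap \<eta> \<epsilon> a b ad bd Bd =
      (1/2) * bd * sqrt (1 - b^2) * (\<integral>x. (\<eta> \<epsilon> x)^2 * Hker k a x \<partial>lborel)
    - (1/\<epsilon>) * b * (1 - b^2) powr (3/2) * (Bpar a b * ad + Bd * a) *
        (\<integral>x. (\<eta> \<epsilon> x)^2 * Wker k a x \<partial>lborel)"
proof -
  have "Bpar a b * (x+a) / \<epsilon> = k*x+k*a" "Bpar a b * (x-a) / \<epsilon> = k*x-k*a" for x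
    unfolding k_def using e by (simp_all add: field_simps)
  then show ?thesis unfolding K_overlap_def Let_def Hker_def Wker_def by (simp add: mult.assoc)
qed

lemma K_overlap_algebra:
  fixes \<epsilon> B bd S L r1 r2 b P ad Bd a E :: real
  assumes "\<epsilon> \<noteq> 0" "B \<noteq> 0"
  shows "(1/2)*bd*S*(4/(B/\<epsilon>)*L*(1+r1))
       - (1/\<epsilon>)*b*P*(B*ad + Bd*a)*(1/(B/\<epsilon>)*L*(16*E*(2*((B/\<epsilon>)*a)-1))*(1+r2))
     = 2*\<epsilon>*bd*S/B*L*(1+r1) - 16*b*P*(ad + Bd*a/B)*L*E*(2*B*a/\<epsilon> - 1)*(1+r2)"
proof -
  have "(1/\<epsilon>)*(B*ad + Bd*a)*(1/(B/\<epsilon>)) = ad + Bd*a/B" using assms by (simp add: field_simps)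
  moreover have "(1/\<epsilon>)*b*P*(B*ad + Bd*a)*(1/(B/\<epsilon>)*L*(16*E*(2*((B/\<epsilon>)*a)-1))*(1+r2))
      = 16*b*P*((1/\<epsilon>)*(B*ad + Bd*a)*(1/(B/\<epsilon>)))*L*E*(2*((B/\<epsilon>)*a)-1)*(1+r2)"
    by (simp only: mult.assoc mult.commute mult.left_commute)
  ultimately have "(1/\<epsilon>)*b*P*(B*ad + Bd*a)*(1/(B/\<epsilon>)*L*(16*E*(2*((B/\<epsilon>)*a)-1))*(1+r2))
      = 16*b*P*(ad + Bd*a/B)*L*E*(2*B*a/\<epsilon> - 1)*(1+r2)" by simp
  moreover have "(1/2)*bd*S*(4/(B/\<epsilon>)*L*(1+r1)) = 2*\<epsilon>*bd*S/B*L*(1+r1)" using assms by simp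
  ultimately show ?thesis by simp
qed

lemma K_overlap_from_averages:
  fixes \<eta> :: "real \<Rightarrow> real \<Rightarrow> real" and \<epsilon> a b ad bd Bd rH rW :: real
  assumes e: "\<epsilon> > 0" and B: "Bpar a b \<noteq> 0"
  defines "k \<equiv> Bpar a b / \<epsilon>" and "E \<equiv> exp (-4 * Bpar a b * a / \<epsilon>)"
  assumes H: "(\<integral>x. (\<eta> \<epsilon> x)^2 * Hker k a x \<partial>lborel) = 4/k*(1-a^2)*(1+rH)"
    and W: "(\<integral>x. (\<eta> \<epsilon> x)^2 * Wker k a x \<partial>lborel) = 1/k*(1-a^2)*(16*E*(2*(k*a)-1))*(1+rW)"
  shows "K_overlap \<eta> \<epsilon> a b ad bd Bd =
             2 * \<epsilon> * bd * sqrt (1 - b^2) / Bpar a b * (1 - a^2) * (1 + rH)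
           - 16 * b * (1 - b^2) powr (3/2) * (ad + Bd * a / Bpar a b) * (1 - a^2)
               * E * (2 * Bpar a b * a / \<epsilon> - 1) * (1 + rW)"
proof -
  have "K_overlap \<eta> \<epsilon> a b ad bd Bd
      = (1/2) * bd * sqrt (1 - b^2) * (4/(Bpar a b/\<epsilon>)*(1-a^2)*(1+rH))
      - (1/\<epsilon>) * b * (1 - b^2) powr (3/2) * (Bpar a b * ad + Bd * a)
          * (1/(Bpar a b/\<epsilon>)*(1-a^2)*(16*E*(2*((Bpar a b/\<epsilon>)*a)-1))*(1+rW))"
    using K_overlap_kernels[OF e, of \<eta> a b ad bd Bd] H W unfolding k_def by simp
  also have "\<dots> = 2 * \<epsilon> * bd * sqrt (1 - b^2) / Bpar a b * (1 - a^2) * (1 + rH)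
           - 16 * b * (1 - b^2) powr (3/2) * (ad + Bd * a / Bpar a b) * (1 - a^2)
               * E * (2 * Bpar a b * a / \<epsilon> - 1) * (1 + rW)"
    by (rule K_overlap_algebra) (use e B in auto)
  finally show ?thesis .
qed

lemma fixed_eps_expansion:
  fixes \<eta> :: "real \<Rightarrow> real \<Rightarrow> real" and \<epsilon> a b ad bd Bd C C1 \<beta> :: real
  assumes e: "0 < \<epsilon>" "\<epsilon> < 1"
    and close: "\<forall>x. \<bar>\<eta> \<epsilon> x - eta0 x\<bar> \<le> C * \<epsilon> powr (1/3)" "C * \<epsilon> powr (1/3) \<le> 1"
    and cont: "continuous_on UNIV (\<eta> \<epsilon>)"
    and a: "0 < a" "a \<le> 1/2" "a \<le> C1 * \<epsilon> powr (1/6)"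
    and b: "\<bar>b\<bar> \<le> \<beta>" "\<beta> < 1"
    and ex: "exp (-4 * Bpar a b * a / \<epsilon>) \<le> (\<epsilon> powr (1/3) / 100)^2"
  defines "K \<equiv> 30*C1^2 + 1024*(1/(1-\<beta>^2)) + 9*C + 12"
  shows "\<exists>r1 r2. \<bar>r1\<bar> \<le> K * \<epsilon> powr (1/3) \<and> \<bar>r2\<bar> \<le> K * \<epsilon> powr (1/3) \<and>
      K_overlap \<eta> \<epsilon> a b ad bd Bd =
             2 * \<epsilon> * bd * sqrt (1 - b^2) / Bpar a b * (1 - a^2) * (1 + r1)
           - 16 * b * (1 - b^2) powr (3/2)
               * (ad + Bd * a / Bpar a b) * (1 - a^2)
               * exp (-4 * Bpar a b * a / \<epsilon>)
               * (2 * Bpar a b * a / \<epsilon> - 1) * (1 + r2)"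
proof -
  define tt where "tt = \<epsilon> powr (1/3)"
  define k where "k = Bpar a b / \<epsilon>"
  define E where "E = exp (-4*k*a)"
  note P = fixed_eps_parameters[OF e a b ex, folded k_def tt_def E_def]
  have tt: "0 < tt" "tt \<le> 1" "C * tt \<ge> 0" unfolding tt_def
    using e close(1) abs_ge_zero order_trans by (auto intro: powr_le1)
  have small: "E \<le> 1/100" "3*E + 9*((k*a)*E) \<le> 1/2" unfolding E_def using P(5,6) tt by auto
  have f_meas: "(\<lambda>x. (\<eta> \<epsilon> x)^2) \<in> borel_measurable borel"
    by (rule borel_measurable_continuous_onI) (intro continuous_intros cont)
  have dev: "\<bar>(\<eta> \<epsilon> x)^2 - (1 - a^2)\<bar> \<le> x^2 + a^2 + 3*(C*tt)" for x
    using eta_sq_deviation[where u="\<eta> \<epsilon>" and d="C*tt"] close unfolding tt_def by auto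
  obtain r1 where r1: "(\<integral>x. (\<eta> \<epsilon> x)^2 * Hker k a x \<partial>lborel) = 4/k*(1-a^2)*(1+r1)"
     "\<bar>r1\<bar> \<le> 3*(5*a^2 + 128/k^2 + 3*(C*tt)) + 3*E + 9*(k*a)*E"
    using Hker_average[OF P(1) a(1,2) small(1)[unfolded E_def] _ f_meas dev] small(2)
    unfolding E_def by (auto simp: mult.assoc)
  obtain r2 where r2: "(\<integral>x. (\<eta> \<epsilon> x)^2 * Wker k a x \<partial>lborel)
        = 1/k*(1-a^2)*(16*E*(2*(k*a)-1))*(1+r2)"
     "\<bar>r2\<bar> \<le> 3*(10*a^2 + 8/k^2 + 3*(C*tt)) + 9*E"
    using Wker_average[OF P(1) a(1,2) P(4) small(1)[unfolded E_def] f_meas dev] unfolding E_def by blast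
  have "\<beta>^2 < 1" using b power_strict_mono[of \<beta> 1 2] by auto
  then have Q: "0 \<le> (1/(1-\<beta>^2))*tt" using tt by simp
  have ik: "1/k^2 \<le> 8/3 * ((1/(1-\<beta>^2))*tt)" using P(3) unfolding tt_def by (simp add: mult.assoc)
  have Es: "E \<le> tt/100" "(k*a)*E \<le> tt/100" using P(5,6) unfolding E_def tt_def by simp_all
  have a2: "a^2 \<le> C1^2*tt" using P(2) unfolding tt_def .
  have K: "K * tt = 30*(C1^2*tt) + 1024*((1/(1-\<beta>^2))*tt) + 9*(C*tt) + 12*tt"
    unfolding K_def by (simp add: algebra_simps)
  have "\<bar>r1\<bar> \<le> 15*a^2 + 128*3*(1/k^2) + 9*(C*tt) + 3*E + 9*((k*a)*E)"
    using r1(2) by (simp add: mult.assoc)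
  then have "\<bar>r1\<bar> \<le> K * tt" using K ik Es a2 zero_le_power2[of a] Q tt by linarith
  moreover have "\<bar>r2\<bar> \<le> 30*a^2 + 8*3*(1/k^2) + 9*(C*tt) + 9*E"
    using r2(2) by (simp add: mult.assoc)
  then have "\<bar>r2\<bar> \<le> K * tt" using K ik Es a2 zero_le_power2[of a] Q tt by linarith
  moreover have E_eq: "E = exp (-4 * Bpar a b * a / \<epsilon>)" unfolding E_def k_def by (simp add: algebra_simps)
  have "Bpar a b \<noteq> 0" using P(1) unfolding k_def by auto
  note K_overlap_from_averages[where \<eta>=\<eta> and \<epsilon>=\<epsilon> and a=a and b=b and rH=r1 and rW=r2,
      OF e(1) this r1(1)[unfolded k_def] r2(1)[unfolded k_def E_eq]]
  ultimately show ?thesis unfolding tt_def by blast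
qed

section \<open>Passing to the limit eps \<rightarrow> 0\<close>

lemma eta_family_uniform_approx:
  assumes "eta_family \<eta>"
  obtains \<epsilon>0 C where "\<epsilon>0 > 0" "C > 0"
    "\<And>\<epsilon>. 0 < \<epsilon> \<Longrightarrow> \<epsilon> < \<epsilon>0 \<Longrightarrow> continuous_on UNIV (\<eta> \<epsilon>)"
    "\<And>\<epsilon> x. 0 < \<epsilon> \<Longrightarrow> \<epsilon> < \<epsilon>0 \<Longrightarrow> \<bar>\<eta> \<epsilon> x - eta0 x\<bar> \<le> C * \<epsilon> powr (1/3)"
proof -
  from assms obtain \<epsilon>0 C where e0: "\<epsilon>0 > 0" "C > 0"
    and diff: "\<And>\<epsilon> n x. 0 < \<epsilon> \<Longrightarrow> \<epsilon> < \<epsilon>0 \<Longrightarrow> ((deriv ^^ n) (\<eta> \<epsilon>)) differentiable (at x)"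
    and approx: "\<And>\<epsilon> x. 0 < \<epsilon> \<Longrightarrow> \<epsilon> < \<epsilon>0 \<Longrightarrow> \<bar>\<eta> \<epsilon> x - eta0 x\<bar> \<le> C * \<epsilon> powr (1/3)"
    unfolding eta_family_def by metis
  have "continuous_on UNIV (\<eta> \<epsilon>)" if "0 < \<epsilon>" "\<epsilon> < \<epsilon>0" for \<epsilon>
    using diff[OF that, of 0] by (auto intro!: continuous_at_imp_continuous_on differentiable_imp_continuous_within)
  then show ?thesis using that e0 approx by blast
qed

lemma eventually_log_bound:
  fixes C2 :: real
  shows "\<forall>\<^sub>F \<epsilon> in at_right 0. C2 * \<epsilon>^2 * \<bar>ln \<epsilon>\<bar> \<le> (\<epsilon> powr (1/3) / 100)^2"
proof -
  have "((\<lambda>e::real. e powr (4/3) * \<bar>ln e\<bar>) \<longlongrightarrow> 0) (at_right 0)" by real_asymp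
  then have "\<forall>\<^sub>F \<epsilon> in at_right 0. (10000*C2) * (\<epsilon> powr (4/3) * \<bar>ln \<epsilon>\<bar>) < 1"
    using order_tendstoD(2)[OF tendsto_mult_left_zero[OF \<open>(_ \<longlongrightarrow> 0) _\<close>, of "10000*C2"], of 1]
    by (simp add: mult.commute)
  moreover have "\<forall>\<^sub>F \<epsilon> in at_right 0. (0::real) < \<epsilon>" by (simp add: eventually_at_right_less)
  ultimately show ?thesis
  proof eventually_elim
    case (elim \<epsilon>)
    have sq: "(\<epsilon> powr (1/3) / 100)^2 = \<epsilon> powr (2/3) / 10000"
      by (simp add: power2_eq_square power_divide powr_add[symmetric])
    have "\<epsilon>^2 = \<epsilon> powr (4/3) * \<epsilon> powr (2/3)"
      using elim(2) by (simp add: powr_add[symmetric] powr_numeral)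
    then have "C2 * \<epsilon>^2 * \<bar>ln \<epsilon>\<bar> = ((10000*C2) * (\<epsilon> powr (4/3) * \<bar>ln \<epsilon>\<bar>)) * (\<epsilon> powr (2/3) / 10000)"
      by (simp only: mult_ac) simp
    also have "\<dots> \<le> 1 * (\<epsilon> powr (2/3) / 10000)" using elim(1) by (intro mult_right_mono) auto
    finally show ?case unfolding sq by simp
  qed
qed

lemma eventually_small_multiple:
  fixes c C :: real
  assumes "c > 0" "d > 0"
  shows "\<forall>\<^sub>F \<epsilon> in at_right 0. C * \<epsilon> powr c < d"
proof -
  have "((\<lambda>e::real. e powr c) \<longlongrightarrow> 0) (at_right 0)" using assms(1) by real_asymp
  from order_tendstoD(2)[OF tendsto_mult_left_zero[OF this, of C] assms(2)]
  show ?thesis by (simp add: mult.commute)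
qed

theorem lemma4:
  fixes \<eta> :: "real \<Rightarrow> real \<Rightarrow> real"
    and a b ad bd Bd :: "real \<Rightarrow> real"
  assumes eta: "eta_family \<eta>"
    and b_range: "\<exists>\<beta><1. \<forall>\<^sub>F \<epsilon> in at_right 0. \<bar>b \<epsilon>\<bar> \<le> \<beta>"
    and a_range: "\<forall>\<^sub>F \<epsilon> in at_right 0. 0 < a \<epsilon> \<and> a \<epsilon> < 1"
    and a_small: "\<exists>C1>0. \<forall>\<^sub>F \<epsilon> in at_right 0. a \<epsilon> \<le> C1 * \<epsilon> powr (1/6)"
    and exp_small: "\<exists>C2>0. \<forall>\<^sub>F \<epsilon> in at_right 0.
        exp (-4 * Bpar (a \<epsilon>) (b \<epsilon>) * a \<epsilon> / \<epsilon>) \<le> C2 * \<epsilon>^2 * \<bar>ln \<epsilon>\<bar>"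
  shows "\<exists>C. \<forall>\<^sub>F \<epsilon> in at_right 0. \<exists>r1 r2.
           \<bar>r1\<bar> \<le> C * \<epsilon> powr (1/3) \<and> \<bar>r2\<bar> \<le> C * \<epsilon> powr (1/3) \<and>
           K_overlap \<eta> \<epsilon> (a \<epsilon>) (b \<epsilon>) (ad \<epsilon>) (bd \<epsilon>) (Bd \<epsilon>) =
             2 * \<epsilon> * bd \<epsilon> * sqrt (1 - (b \<epsilon>)^2) / Bpar (a \<epsilon>) (b \<epsilon>) * (1 - (a \<epsilon>)^2) * (1 + r1)
           - 16 * b \<epsilon> * (1 - (b \<epsilon>)^2) powr (3/2)
               * (ad \<epsilon> + Bd \<epsilon> * a \<epsilon> / Bpar (a \<epsilon>) (b \<epsilon>)) * (1 - (a \<epsilon>)^2)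
               * exp (-4 * Bpar (a \<epsilon>) (b \<epsilon>) * a \<epsilon> / \<epsilon>)
               * (2 * Bpar (a \<epsilon>) (b \<epsilon>) * a \<epsilon> / \<epsilon> - 1) * (1 + r2)"
proof -
  obtain \<epsilon>0 C where e0: "\<epsilon>0 > 0" "C > 0"
    and cont: "\<And>\<epsilon>. 0 < \<epsilon> \<Longrightarrow> \<epsilon> < \<epsilon>0 \<Longrightarrow> continuous_on UNIV (\<eta> \<epsilon>)"
    and close: "\<And>\<epsilon> x. 0 < \<epsilon> \<Longrightarrow> \<epsilon> < \<epsilon>0 \<Longrightarrow> \<bar>\<eta> \<epsilon> x - eta0 x\<bar> \<le> C * \<epsilon> powr (1/3)"
    using eta_family_uniform_approx[OF eta] by blast
  obtain \<beta> C1 C2 where \<beta>: "\<beta> < 1" and ev_b: "\<forall>\<^sub>F \<epsilon> in at_right 0. \<bar>b \<epsilon>\<bar> \<le> \<beta>"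
    and ev_a: "\<forall>\<^sub>F \<epsilon> in at_right 0. a \<epsilon> \<le> C1 * \<epsilon> powr (1/6)"
    and ev_E: "\<forall>\<^sub>F \<epsilon> in at_right 0. exp (-4 * Bpar (a \<epsilon>) (b \<epsilon>) * a \<epsilon> / \<epsilon>) \<le> C2 * \<epsilon>^2 * \<bar>ln \<epsilon>\<bar>"
    using b_range a_small exp_small by blast
  have ev_e: "\<forall>\<^sub>F \<epsilon> in at_right 0. 0 < \<epsilon> \<and> \<epsilon> < min \<epsilon>0 1"
    using eventually_at_right_real[of 0 "min \<epsilon>0 1"] e0 by (auto elim: eventually_mono)
  have ev_C: "\<forall>\<^sub>F \<epsilon> in at_right 0. C * \<epsilon> powr (1/3) < 1"
    and ev_C1: "\<forall>\<^sub>F \<epsilon> in at_right 0. C1 * \<epsilon> powr (1/6) < 1/2"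
    by (rule eventually_small_multiple; simp)+
  show ?thesis
  proof (intro exI[of _ "30*C1^2 + 1024*(1/(1-\<beta>^2)) + 9*C + 12"], goal_cases)
    case 1
    show ?case
      using ev_e ev_C ev_C1 eventually_log_bound[of C2] ev_b ev_a ev_E a_range
    proof eventually_elim
      case (elim \<epsilon>)
      then show ?case
        by (intro fixed_eps_expansion[OF _ _ _ _ cont] allI close) (use \<beta> in \<open>auto intro: order_trans\<close>)
    qed
  qed
qed

end
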